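(* Let $P=(-1,0)$ and define $u=(u_1,u_2):\overline{B_1}\setminus\{P\}\to\mathbb R^2$ by $u(x)=(1-2|x|,0)$ for $|x|\le 1/2$, and for $0\le\varepsilon\le 1/2$ and $\theta\in[0,2\pi]$, $$u\big((1-\varepsilon)\cos\theta,(1-\varepsilon)\sin\theta\big)=\Big(\min\Big\{\tfrac{1-2\varepsilon}{2\pi\varepsilon}|\pi-\theta|,\,1\Big\},\,0\Big),$$ with the convention that for $\varepsilon=0$ (and $\theta\neq\pi$) the value is $(1,0)$. Let $\gamma:[0,1]\to\mathbb R^2\setminus\{P\}$ be continuous and injective, and let $a_1<b_1<a_2<b_2<\dots<a_N<b_N$ in $[0,1]$ be such that for each $i$, $\gamma((a_i,b_i))\subseteq B_1$ and $\gamma(a_i),\gamma(b_i)\in\partial B_1\setminus\{P\}$. For each $i$ let $\ell_i=\min_{t\in[a_i,b_i]}u_1(\gamma(t))$ and let $A_i$ be the closed arc of $\partial B_1\setminus\{P\}$ with endpoints $\gamma(a_i)$ and $\gamma(b_i)$. If $i\neq j$ and $A_i\subseteq A_j$, then $\ell_j\le\ell_i$.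
   Context: $B_r$ is the open disk of radius $r$ centred at the origin. The map $u$ is continuous on $\overline{B_1}\setminus\{P\}$, takes values in $[0,1]\times\{0\}$, and equals $(1,0)$ on $\partial B_1\setminus\{P\}$. *)

theory Defs
  imports "HOL-Analysis.Analysis"
begin

text \<open>The plane R^2 is modelled as the complex numbers; the point P = (-1,0) is -1.\<close>

definition P_pt :: complex where "P_pt = -1"

text \<open>For 1/2 \<le> |x| \<le> 1 we write |x| = 1 - eps and
  x = |x| (cos theta, sin theta) with theta = Arg2pi x in [0, 2 pi); the value at theta = 2 pi
  coincides with that at theta = 0, so this covers the paper's range [0, 2 pi].
  Only values on the closed unit disk minus P matter.\<close>
definition u1 :: "complex \<Rightarrow> real" where
  "u1 x = (if norm x \<le> 1/2 then 1 - 2 * norm x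
           else (let eps = 1 - norm x; theta = Arg2pi x in
                 if eps = 0 then 1
                 else min ((1 - 2*eps) / (2*pi*eps) * \<bar>pi - theta\<bar>) 1))"

definition u :: "complex \<Rightarrow> real \<times> real" where
  "u x = (u1 x, 0)"

text \<open>The closed arc of the unit circle minus P with endpoints p and q (both on the
  circle, different from P): points cis t with t between the arguments of p and q in (-pi, pi),
  i.e. the arc not passing through P.\<close>
definition circ_arc :: "complex \<Rightarrow> complex \<Rightarrow> complex set" where
  "circ_arc p q = {cis t | t. min (Arg p) (Arg q) \<le> t \<and> t \<le> max (Arg p) (Arg q)}"

end

theory Submission
  imports Defs
begin

text \<open>The j-th excursion together with the arc A_j is a Jordan curve C_j in the closed
  unit disk. The i-th excursion starts on A_i \<subseteq> A_j, never meets C_j (injectivity of the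
  curve), and immediately enters the open disk, so it runs in the inside of C_j. From a point
  inside C_j, turning at constant radius towards the negative real axis and then running out
  along it never increases u1; this path leaves the inside of C_j, and it can only do so
  through a point of the j-th excursion, since the arc lies on the unit circle and the path
  meets the circle only at P. So every value of u1 on the i-th excursion is at least some
  value of u1 on the j-th one.\<close>

lemma arc_compose:
  assumes "arc g" "continuous_on (path_image g) f" "inj_on f (path_image g)"
  shows "arc (f \<circ> g)"
  using assms by (auto simp: arc_def path_image_def intro: path_continuous_image[unfolded path_image_def] comp_inj_on)

lemma inside_subset_ball:
  fixes S :: "'a::{real_normed_vector, perfect_space} set"
  assumes "closed S" "S \<subseteq> cball a r"
  shows "inside S \<subseteq> ball a r"
proof -
  have "- cball a r \<subseteq> outside S"
    using assms(2) by (intro outside_subset_convex) auto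
  then have "inside S \<subseteq> cball a r"
    using inside_Int_outside by blast
  then have "inside S \<subseteq> interior (cball a r)"
    using open_inside[OF assms(1)] by (intro interior_maximal)
  then show ?thesis by simp
qed

lemma connected_subset_if_frontier_disjoint:
  assumes "connected S" "S \<inter> frontier T = {}" "S \<inter> T \<noteq> {}"
  shows "S \<subseteq> T"
  using connected_Int_frontier[OF assms(1,3)] assms(2) by blast

text \<open>Near p the set C lies on the sphere, so the part of the open ball near p lies in
  the inside of C.\<close>
lemma connected_subset_inside_at_sphere:
  fixes C G V :: "'a::{real_normed_vector, perfect_space} set"
  assumes fr: "frontier (inside C) = C" and C: "C \<subseteq> cball a r" "C \<subseteq> G \<union> sphere a r"
    and "closed G" and p: "p \<in> C - G"
    and V: "connected V" "V \<subseteq> ball a r" "V \<inter> C = {}" "p \<in> closure V"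
  shows "V \<subseteq> inside C"
proof -
  obtain e where "e > 0" "ball p e \<subseteq> - G"
    using p \<open>closed G\<close> open_contains_ball[of "- G"] by (auto simp: open_Compl)
  then have e: "e > 0" "ball p e \<inter> G = {}" by auto
  define W where "W = ball p e \<inter> ball a r"
  have inside_ball: "inside C \<subseteq> ball a r"
    using C(1) fr frontier_closed[of "inside C"] by (intro inside_subset_ball) auto
  have "connected W" unfolding W_def by (intro convex_connected convex_Int) auto
  moreover have "W \<inter> frontier (inside C) = {}"
    using e(2) C(2) by (auto simp: W_def fr)
  moreover have "W \<inter> inside C \<noteq> {}"
  proof -
    have "p \<in> closure (inside C)" using p fr by (auto simp: frontier_def)
    then obtain y where "y \<in> inside C" "dist y p < e"
      using e(1) closure_approachable by blast
    then show ?thesis using inside_ball by (auto simp: W_def dist_commute)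
  qed
  ultimately have "W \<subseteq> inside C" by (rule connected_subset_if_frontier_disjoint)
  moreover obtain v where "v \<in> V" "dist v p < e"
    using V(4) e(1) closure_approachable by blast
  ultimately have "V \<inter> inside C \<noteq> {}"
    using V(2) by (auto simp: W_def dist_commute)
  then show ?thesis
    using V(1,3) fr by (intro connected_subset_if_frontier_disjoint) auto
qed

lemma abs_pi_minus_Arg2pi: "\<bar>pi - Arg2pi z\<bar> = pi - \<bar>Arg z\<bar>"
proof (cases "z = 0")
  case False
  have z: "of_real (norm z) * exp (\<i> * of_real (Arg z)) = z"
    using Arg_eq[OF False] by simp
  have "norm z > 0" using False by simp
  show ?thesis
  proof (cases "0 \<le> Arg z")
    case True
    have "Arg z < 2*pi" using Arg_le_pi[of z] pi_gt_zero by linarith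
    then have "Arg2pi z = Arg z"
      using Arg2pi_unique[OF z \<open>norm z > 0\<close> True] by blast
    then show ?thesis using True Arg_le_pi[of z] by simp
  next
    case False
    have "of_real (norm z) * exp (\<i> * of_real (Arg z + 2*pi)) = z"
      using z by (simp add: algebra_simps exp_add)
    moreover have "0 \<le> Arg z + 2*pi" "Arg z + 2*pi < 2*pi"
      using False mpi_less_Arg[of z] by linarith+
    ultimately have "Arg2pi z = Arg z + 2*pi"
      using Arg2pi_unique \<open>norm z > 0\<close> by blast
    then show ?thesis using False mpi_less_Arg[of z] by simp
  qed
qed (use Arg_of_real[of 0] in simp)

lemma abs_Arg_rcis:
  assumes "0 < r" "-pi \<le> \<phi>" "\<phi> \<le> pi"
  shows "\<bar>Arg (rcis r \<phi>)\<bar> = \<bar>\<phi>\<bar>"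
proof (cases "\<phi> = -pi")
  case True
  then have "rcis r \<phi> = of_real (-r)" by (simp add: rcis_def complex_eq_iff)
  then show ?thesis using True assms Arg_of_real[of "-r"] by simp
next
  case False
  then show ?thesis using assms by (simp add: rcis_def Arg_cis)
qed

lemma cis_Arg_norm_1: "norm p = 1 \<Longrightarrow> cis (Arg p) = p"
  using rcis_cmod_Arg[of p] by (simp add: rcis_def)

lemma Arg_less_pi: "norm p = 1 \<Longrightarrow> p \<noteq> -1 \<Longrightarrow> Arg p < pi"
  using cis_Arg_norm_1[of p] Arg_le_pi[of p] by (metis cis_pi order_less_le)

lemma u1_sphere: "norm z = 1 \<Longrightarrow> u1 z = 1"
  by (simp add: u1_def)

lemma u1_le_1: "u1 z \<le> 1"
  by (simp add: u1_def Let_def)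

lemma u1_annulus:
  assumes "1/2 < norm z" "norm z < 1"
  shows "u1 z = min ((1 - 2 * (1 - norm z)) / (2 * pi * (1 - norm z)) * (pi - \<bar>Arg z\<bar>)) 1"
  using assms by (simp add: u1_def Let_def abs_pi_minus_Arg2pi)

lemma u1_nonneg:
  assumes "norm z \<le> 1"
  shows "0 \<le> u1 z"
proof -
  consider "norm z \<le> 1/2" | "norm z = 1" | "1/2 < norm z" "norm z < 1"
    using assms by linarith
  then show ?thesis
  proof cases
    case 3
    then have "0 \<le> (1 - 2 * (1 - norm z)) / (2 * pi * (1 - norm z)) * (pi - \<bar>Arg z\<bar>)"
      using Arg_le_pi[of z] mpi_less_Arg[of z] by (intro mult_nonneg_nonneg divide_nonneg_nonneg) auto
    then show ?thesis using 3 by (simp add: u1_annulus)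
  qed (simp_all add: u1_def)
qed

lemma u1_mono_abs_Arg:
  assumes "norm w = norm z" "norm z < 1" "\<bar>Arg z\<bar> \<le> \<bar>Arg w\<bar>"
  shows "u1 w \<le> u1 z"
proof (cases "norm z \<le> 1/2")
  case True
  then show ?thesis using assms(1) by (simp add: u1_def)
next
  case False
  define k where "k = (1 - 2 * (1 - norm z)) / (2 * pi * (1 - norm z))"
  have "0 \<le> k" using False assms(2) by (simp add: k_def)
  then have "k * (pi - \<bar>Arg w\<bar>) \<le> k * (pi - \<bar>Arg z\<bar>)"
    using assms(3) by (intro mult_left_mono) auto
  then show ?thesis
    using False assms(1,2) by (simp add: u1_annulus k_def min_le_iff_disj)
qed

lemma u1_minus_of_real:
  assumes "norm x \<le> r" "r < 1"
  shows "u1 (- of_real r) \<le> u1 x"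
proof (cases "r \<le> 1/2")
  case True
  have "0 \<le> r" using assms(1) norm_ge_zero[of x] by linarith
  then show ?thesis using True assms(1) by (simp add: u1_def)
next
  case False
  have "u1 (- of_real r) = 0"
    using False assms(2) Arg2pi_of_real[of "-r"] by (simp add: u1_def Let_def)
  then show ?thesis using u1_nonneg[of x] assms by simp
qed

lemma u1_descent_continuum:
  assumes "norm x < 1"
  obtains Q where "connected Q" "x \<in> Q" "-2 \<in> Q"
    "\<And>z. z \<in> Q \<Longrightarrow> norm z \<le> 1 \<Longrightarrow> z \<noteq> -1 \<Longrightarrow> norm z < 1 \<and> u1 z \<le> u1 x"
proof -
  define \<rho> where "\<rho> = norm x"
  define \<sigma> where "\<sigma> = (if 0 \<le> Arg x then pi else -pi)"
  define Turn where "Turn = rcis \<rho> ` closed_segment (Arg x) \<sigma>"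
  define Ray where "Ray = (\<lambda>r. - of_real r :: complex) ` {\<rho>..2}"
  have "connected Turn"
    unfolding Turn_def by (intro connected_continuous_image continuous_intros) auto
  moreover have "connected Ray"
    unfolding Ray_def by (intro connected_continuous_image continuous_intros) auto
  moreover have "rcis \<rho> \<sigma> \<in> Turn" unfolding Turn_def by blast
  moreover have "rcis \<rho> \<sigma> \<in> Ray"
    using assms by (auto simp: Ray_def \<sigma>_def \<rho>_def rcis_def complex_eq_iff intro!: image_eqI[of _ _ \<rho>])
  ultimately have "connected (Turn \<union> Ray)" by (intro connected_Un) auto
  moreover have "x \<in> Turn \<union> Ray"
    unfolding Turn_def \<rho>_def using rcis_cmod_Arg[of x] by (metis UnI1 ends_in_segment(1) image_eqI)
  moreover have "-2 \<in> Turn \<union> Ray"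
    using assms by (auto simp: Ray_def \<rho>_def intro!: image_eqI[of _ _ 2])
  moreover have "norm z < 1 \<and> u1 z \<le> u1 x"
    if "z \<in> Turn \<union> Ray" "norm z \<le> 1" "z \<noteq> -1" for z
    using that(1)
  proof
    assume "z \<in> Turn"
    then obtain \<phi> where \<phi>: "\<phi> \<in> closed_segment (Arg x) \<sigma>" and z: "z = rcis \<rho> \<phi>"
      unfolding Turn_def by blast
    have "u1 z \<le> u1 x"
    proof (cases "\<rho> = 0")
      case True
      then show ?thesis by (simp add: z \<rho>_def)
    next
      case False
      have "-pi \<le> \<phi> \<and> \<phi> \<le> pi \<and> \<bar>Arg x\<bar> \<le> \<bar>\<phi>\<bar>"
        using \<phi> mpi_less_Arg[of x] Arg_le_pi[of x]
        by (auto simp: \<sigma>_def closed_segment_eq_real_ivl split: if_splits)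
      then show ?thesis
        using False assms abs_Arg_rcis[of \<rho> \<phi>] by (intro u1_mono_abs_Arg) (auto simp: z \<rho>_def)
    qed
    then show ?thesis using assms by (simp add: z \<rho>_def)
  next
    assume "z \<in> Ray"
    then obtain r where r: "r \<in> {\<rho>..2}" and z: "z = - of_real r" unfolding Ray_def by blast
    have "0 \<le> r" using r norm_ge_zero[of x] unfolding \<rho>_def atLeastAtMost_iff by linarith
    then have "r < 1" using that(2,3) by (auto simp: z)
    then show ?thesis using r \<open>0 \<le> r\<close> u1_minus_of_real[of x r] by (simp add: z \<rho>_def)
  qed
  ultimately show ?thesis using that by blast
qed

lemma u1_descends_to_loop:
  assumes fr: "frontier (inside C) = C" and C: "C \<subseteq> cball 0 1" "-1 \<notin> C"
    and x: "x \<in> inside C"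
  shows "\<exists>z\<in>C. norm z < 1 \<and> u1 z \<le> u1 x"
proof -
  have inside_ball: "inside C \<subseteq> ball 0 1"
    using C(1) fr frontier_closed[of "inside C"] by (intro inside_subset_ball) auto
  then have "norm x < 1" using x by auto
  then obtain Q where Q: "connected Q" "x \<in> Q" "-2 \<in> Q"
    and descent: "\<And>z. z \<in> Q \<Longrightarrow> norm z \<le> 1 \<Longrightarrow> z \<noteq> -1 \<Longrightarrow> norm z < 1 \<and> u1 z \<le> u1 x"
    using u1_descent_continuum by metis
  have "-2 \<notin> inside C" using inside_ball by auto
  then have "Q \<inter> inside C \<noteq> {}" "Q - inside C \<noteq> {}" using Q(2,3) x by auto
  then obtain z where z: "z \<in> Q" "z \<in> C"
    using connected_Int_frontier[OF Q(1)] fr by blast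
  moreover have "norm z \<le> 1" "z \<noteq> -1" using z(2) C by auto
  ultimately show ?thesis using descent[of z] by auto
qed

lemma circ_arc_eq_image: "circ_arc p q = cis ` closed_segment (Arg p) (Arg q)"
  by (auto simp: circ_arc_def closed_segment_eq_real_ivl min_def max_def split: if_splits)

lemma circ_arc_subset_sphere: "circ_arc p q \<subseteq> sphere 0 1"
  by (auto simp: circ_arc_eq_image)

lemma start_in_circ_arc: "norm p = 1 \<Longrightarrow> p \<in> circ_arc p q"
  unfolding circ_arc_eq_image by (metis cis_Arg_norm_1 ends_in_segment(1) image_eqI)

lemma inj_on_cis_closed_segment_Arg: "inj_on cis (closed_segment (Arg p) (Arg q))"
proof
  fix s t assume "s \<in> closed_segment (Arg p) (Arg q)" "t \<in> closed_segment (Arg p) (Arg q)" "cis s = cis t"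
  moreover have "s \<in> {-pi<..pi}" "t \<in> {-pi<..pi}"
    using calculation mpi_less_Arg[of p] mpi_less_Arg[of q] Arg_le_pi[of p] Arg_le_pi[of q]
    by (auto simp: closed_segment_eq_real_ivl split: if_splits)
  ultimately show "s = t" by (metis Arg_cis)
qed

lemma minus_one_notin_circ_arc:
  assumes "p \<in> sphere 0 1 - {-1}" "q \<in> sphere 0 1 - {-1}"
  shows "-1 \<notin> circ_arc p q"
proof
  assume "-1 \<in> circ_arc p q"
  then obtain t where t: "t \<in> closed_segment (Arg p) (Arg q)" "cis t = -1"
    by (auto simp: circ_arc_eq_image)
  have "t \<in> {-pi<..<pi}"
    using t(1) assms Arg_less_pi[of p] Arg_less_pi[of q] mpi_less_Arg[of p] mpi_less_Arg[of q]
    by (auto simp: closed_segment_eq_real_ivl split: if_splits)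
  then have "Arg (cis t) = t" by (simp add: Arg_cis)
  then show False using t(2) \<open>t \<in> {-pi<..<pi}\<close> Arg_of_real[of "-1"] by simp
qed

definition excursion :: "(real \<Rightarrow> complex) \<Rightarrow> real \<Rightarrow> real \<Rightarrow> bool" where
  "excursion \<gamma> a b \<longleftrightarrow> a < b \<and> continuous_on {a..b} \<gamma> \<and> inj_on \<gamma> {a..b} \<and>
     \<gamma> ` {a<..<b} \<subseteq> ball 0 1 \<and> \<gamma> a \<in> sphere 0 1 - {-1} \<and> \<gamma> b \<in> sphere 0 1 - {-1}"

definition excursion_loop :: "(real \<Rightarrow> complex) \<Rightarrow> real \<Rightarrow> real \<Rightarrow> complex set" where
  "excursion_loop \<gamma> a b = \<gamma> ` {a..b} \<union> circ_arc (\<gamma> a) (\<gamma> b)"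

lemma excursion_norm_le_1:
  assumes "excursion \<gamma> a b" "t \<in> {a..b}"
  shows "norm (\<gamma> t) \<le> 1" and "norm (\<gamma> t) = 1 \<Longrightarrow> t = a \<or> t = b"
proof -
  have "t = a \<or> t = b \<or> \<gamma> t \<in> ball 0 1"
    using assms by (force simp: excursion_def)
  then show "norm (\<gamma> t) \<le> 1" "norm (\<gamma> t) = 1 \<Longrightarrow> t = a \<or> t = b"
    using assms(1) by (auto simp: excursion_def)
qed

lemma excursion_loop_subset_cball: "excursion \<gamma> a b \<Longrightarrow> excursion_loop \<gamma> a b \<subseteq> cball 0 1"
  using excursion_norm_le_1 circ_arc_subset_sphere by (fastforce simp: excursion_loop_def)

lemma minus_one_notin_excursion_loop:
  assumes "excursion \<gamma> a b"
  shows "-1 \<notin> excursion_loop \<gamma> a b"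
proof -
  have "\<gamma> t \<noteq> -1" if "t \<in> {a..b}" for t
    using excursion_norm_le_1[OF assms that] assms by (force simp: excursion_def)
  then have "-1 \<notin> \<gamma> ` {a..b}" by force
  moreover have "-1 \<notin> circ_arc (\<gamma> a) (\<gamma> b)"
    using assms minus_one_notin_circ_arc by (simp add: excursion_def)
  ultimately show ?thesis by (simp add: excursion_loop_def)
qed

lemma simple_loop_excursion_loop:
  assumes exc: "excursion \<gamma> a b"
  obtains c where "simple_path c" "pathfinish c = pathstart c" "path_image c = excursion_loop \<gamma> a b"
proof -
  define g1 where "g1 = \<gamma> \<circ> linepath a b"
  define g2 where "g2 = cis \<circ> linepath (Arg (\<gamma> b)) (Arg (\<gamma> a))"
  have ab: "a < b" and cont: "continuous_on {a..b} \<gamma>" and inj: "inj_on \<gamma> {a..b}"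
    and ends: "norm (\<gamma> a) = 1" "norm (\<gamma> b) = 1"
    using exc by (auto simp: excursion_def)
  have seg: "closed_segment a b = {a..b}" using ab by (simp add: closed_segment_eq_real_ivl)
  have im1: "path_image g1 = \<gamma> ` {a..b}"
    by (simp add: g1_def path_image_compose seg)
  have im2: "path_image g2 = circ_arc (\<gamma> a) (\<gamma> b)"
    by (simp add: g2_def path_image_compose circ_arc_eq_image closed_segment_commute)
  have s1: "pathstart g1 = \<gamma> a" "pathfinish g1 = \<gamma> b"
    by (simp_all add: g1_def pathstart_compose pathfinish_compose)
  have s2: "pathstart g2 = \<gamma> b" "pathfinish g2 = \<gamma> a"
    by (simp_all add: g2_def pathstart_compose pathfinish_compose cis_Arg_norm_1 ends)
  have "arc g1"
    unfolding g1_def using ab cont inj by (intro arc_compose) (auto simp: seg)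
  moreover have "Arg (\<gamma> b) \<noteq> Arg (\<gamma> a)"
    using inj ab ends cis_Arg_norm_1 by (metis atLeastAtMost_iff inj_onD less_eq_real_def order_less_irrefl)
  then have "arc g2"
    unfolding g2_def using inj_on_cis_closed_segment_Arg[of "\<gamma> b" "\<gamma> a"]
    by (intro arc_compose continuous_intros) (auto simp: closed_segment_commute)
  moreover have "path_image g1 \<inter> path_image g2 \<subseteq> {pathstart g1, pathstart g2}"
    using excursion_norm_le_1(2)[OF exc] circ_arc_subset_sphere
    by (fastforce simp: im1 im2 s1 s2)
  ultimately have "simple_path (g1 +++ g2)"
    using s1 s2 by (intro simple_path_join_loop) auto
  moreover have "path_image (g1 +++ g2) = excursion_loop \<gamma> a b"
    using s1 s2 by (simp add: path_image_join im1 im2 excursion_loop_def)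
  ultimately show ?thesis using that s1 s2 by simp
qed

lemma frontier_inside_excursion_loop:
  "excursion \<gamma> a b \<Longrightarrow> frontier (inside (excursion_loop \<gamma> a b)) = excursion_loop \<gamma> a b"
  by (metis simple_loop_excursion_loop Jordan_inside_outside)

lemma u1_nested_excursion:
  assumes ei: "excursion \<gamma> ai bi" and ej: "excursion \<gamma> aj bj"
    and disj: "\<gamma> ` {ai..bi} \<inter> \<gamma> ` {aj..bj} = {}"
    and start: "\<gamma> ai \<in> circ_arc (\<gamma> aj) (\<gamma> bj)"
    and s: "s \<in> {ai..bi}"
  shows "\<exists>t\<in>{aj..bj}. u1 (\<gamma> t) \<le> u1 (\<gamma> s)"
proof (cases "s \<in> {ai<..<bi}")
  case False
  then have "s = ai \<or> s = bi" using s by auto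
  then have "norm (\<gamma> s) = 1" using ei by (auto simp: excursion_def)
  moreover have "aj \<in> {aj..bj}" using ej by (simp add: excursion_def)
  ultimately show ?thesis using u1_le_1 u1_sphere by fastforce
next
  case True
  define G where "G = \<gamma> ` {aj..bj}"
  define C where "C = excursion_loop \<gamma> aj bj"
  define V where "V = \<gamma> ` {ai<..<bi}"
  have ai: "ai < bi" "continuous_on {ai..bi} \<gamma>" "V \<subseteq> ball 0 1"
    using ei by (simp_all add: excursion_def V_def)
  have fr: "frontier (inside C) = C" unfolding C_def using ej by (rule frontier_inside_excursion_loop)
  have Ccball: "C \<subseteq> cball 0 1" unfolding C_def using ej by (rule excursion_loop_subset_cball)
  have CG: "C \<subseteq> G \<union> sphere 0 1"
    using circ_arc_subset_sphere by (auto simp: C_def G_def excursion_loop_def)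
  have "V \<subseteq> inside C"
  proof (rule connected_subset_inside_at_sphere[OF fr Ccball CG])
    show "closed G"
      using ej unfolding G_def by (intro compact_imp_closed compact_continuous_image) (simp_all add: excursion_def)
    have "\<gamma> ai \<in> \<gamma> ` {ai..bi}" using ai by simp
    then have "\<gamma> ai \<notin> G" using disj unfolding G_def by blast
    moreover have "\<gamma> ai \<in> C" using start by (simp add: C_def excursion_loop_def)
    ultimately show "\<gamma> ai \<in> C - G" by blast
    show "connected V" unfolding V_def
      by (rule connected_continuous_image[OF continuous_on_subset[OF ai(2)]]) auto
    show "V \<subseteq> ball 0 1" by (fact ai)
    have "V \<subseteq> \<gamma> ` {ai..bi}" unfolding V_def by (rule image_mono) auto
    then have "V \<inter> G = {}" using disj unfolding G_def by blast
    moreover have "V \<inter> sphere 0 1 = {}" using ai(3) by force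
    ultimately show "V \<inter> C = {}" using CG by blast
    have "\<gamma> ` closure {ai<..<bi} \<subseteq> closure V"
      using ai closure_subset[of V] by (intro image_closure_subset) (simp_all add: V_def)
    then show "\<gamma> ai \<in> closure V" using ai by auto
  qed
  then have "\<gamma> s \<in> inside C" using True by (auto simp: V_def)
  then obtain z where z: "z \<in> C" "norm z < 1" "u1 z \<le> u1 (\<gamma> s)"
    using u1_descends_to_loop[OF fr Ccball] minus_one_notin_excursion_loop[OF ej] by (auto simp: C_def)
  then have "z \<in> G" using CG by auto
  then show ?thesis using z by (auto simp: G_def)
qed

lemma interval_chain_less:
  fixes a b :: "nat \<Rightarrow> 'a::linorder"
  assumes ab: "\<forall>i\<in>{1..N}. a i < b i" and ba: "\<forall>i. 1 \<le> i \<and> i < N \<longrightarrow> b i < a (Suc i)"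
    and "1 \<le> i" "i < j" "j \<le> N"
  shows "b i < a j"
  using assms(4,5)
proof (induction j)
  case (Suc k)
  show ?case
  proof (cases "i = k")
    case True
    then show ?thesis using ba Suc.prems \<open>1 \<le> i\<close> by auto
  next
    case False
    then have "b i < a k" "a k < b k" "b k < a (Suc k)"
      using Suc ab ba \<open>1 \<le> i\<close> by auto
    then show ?thesis by order
  qed
qed simp

lemma interval_chain_disjoint:
  fixes a b :: "nat \<Rightarrow> 'a::linorder"
  assumes "\<forall>i\<in>{1..N}. a i < b i" "\<forall>i. 1 \<le> i \<and> i < N \<longrightarrow> b i < a (Suc i)"
    and "i \<in> {1..N}" "j \<in> {1..N}" "i \<noteq> j"
  shows "{a i..b i} \<inter> {a j..b j} = {}"
  using interval_chain_less[OF assms(1,2), of i j] interval_chain_less[OF assms(1,2), of j i] assms(3-5)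
  by (cases "i < j") auto

lemma interval_chain_subset:
  fixes a b :: "nat \<Rightarrow> 'a::linorder"
  assumes ab: "\<forall>i\<in>{1..N}. a i < b i" and ba: "\<forall>i. 1 \<le> i \<and> i < N \<longrightarrow> b i < a (Suc i)"
    and k: "k \<in> {1..N}"
  shows "{a k..b k} \<subseteq> {a 1..b N}"
proof -
  have "a 1 \<le> a k"
  proof (cases "k = 1")
    case False
    then have "a 1 < b 1" "b 1 < a k" using interval_chain_less[OF ab ba, of 1 k] ab k by auto
    then show ?thesis by order
  qed simp
  moreover have "b k \<le> b N"
  proof (cases "k = N")
    case False
    then have "b k < a N" "a N < b N" using interval_chain_less[OF ab ba, of k N] ab k by auto
    then show ?thesis by order
  qed simp
  ultimately show ?thesis by auto
qed

theorem lemma3p1: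
  fixes \<gamma> :: "real \<Rightarrow> complex" and a b :: "nat \<Rightarrow> real" and N :: nat
  assumes cont: "continuous_on {0..1} \<gamma>"
    and inj: "inj_on \<gamma> {0..1}"
    and avoidP: "\<forall>t\<in>{0..1}. \<gamma> t \<noteq> P_pt"
    and a1: "N \<ge> 1 \<longrightarrow> 0 \<le> a 1"
    and bN: "N \<ge> 1 \<longrightarrow> b N \<le> 1"
    and ab: "\<forall>i\<in>{1..N}. a i < b i"
    and ba: "\<forall>i. 1 \<le> i \<and> i < N \<longrightarrow> b i < a (Suc i)"
    and inside: "\<forall>i\<in>{1..N}. \<gamma> ` {a i<..<b i} \<subseteq> ball 0 1"
    and ends_a: "\<forall>i\<in>{1..N}. \<gamma> (a i) \<in> sphere 0 1 - {P_pt}"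
    and ends_b: "\<forall>i\<in>{1..N}. \<gamma> (b i) \<in> sphere 0 1 - {P_pt}"
  shows "\<forall>i\<in>{1..N}. \<forall>j\<in>{1..N}. i \<noteq> j \<longrightarrow>
           circ_arc (\<gamma> (a i)) (\<gamma> (b i)) \<subseteq> circ_arc (\<gamma> (a j)) (\<gamma> (b j)) \<longrightarrow>
           (INF t\<in>{a j..b j}. fst (u (\<gamma> t))) \<le> (INF t\<in>{a i..b i}. fst (u (\<gamma> t)))"
proof (intro ballI impI)
  fix i j assume i: "i \<in> {1..N}" and j: "j \<in> {1..N}" and "i \<noteq> j"
    and sub: "circ_arc (\<gamma> (a i)) (\<gamma> (b i)) \<subseteq> circ_arc (\<gamma> (a j)) (\<gamma> (b j))"
  have unit: "{a k..b k} \<subseteq> {0..1}" if "k \<in> {1..N}" for k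
    using interval_chain_subset[OF ab ba that] a1 bN that by auto
  have exc: "excursion \<gamma> (a k) (b k)" if "k \<in> {1..N}" for k
    unfolding excursion_def
    using that ab inside ends_a ends_b continuous_on_subset[OF cont unit[OF that]]
      inj_on_subset[OF inj unit[OF that]]
    by (simp add: P_pt_def)
  have disj: "\<gamma> ` {a i..b i} \<inter> \<gamma> ` {a j..b j} = {}"
    using inj_on_image_Int[OF inj unit[OF i] unit[OF j]] interval_chain_disjoint[OF ab ba i j \<open>i \<noteq> j\<close>]
    by simp
  have start: "\<gamma> (a i) \<in> circ_arc (\<gamma> (a j)) (\<gamma> (b j))"
    using sub start_in_circ_arc ends_a i by auto
  show "(INF t\<in>{a j..b j}. fst (u (\<gamma> t))) \<le> (INF t\<in>{a i..b i}. fst (u (\<gamma> t)))"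
    unfolding u_def fst_conv
  proof (rule cINF_mono)
    show "{a i..b i} \<noteq> {}" using ab i by fastforce
    show "bdd_below ((\<lambda>t. u1 (\<gamma> t)) ` {a j..b j})"
      using u1_nonneg excursion_norm_le_1(1)[OF exc[OF j]] by (intro bdd_belowI2[of _ 0]) auto
    show "\<exists>t\<in>{a j..b j}. u1 (\<gamma> t) \<le> u1 (\<gamma> s)" if "s \<in> {a i..b i}" for s
      using u1_nested_excursion[OF exc[OF i] exc[OF j] disj start that] .
  qed
qed

end
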